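(* Let $\alpha\colon G\to\mathrm{Aut}(A)$ be a tracially amenable action of a discrete group $G$ on a unital C$^*$-algebra $A$ with $T(A)\neq\emptyset$. Then $G$ is amenable if and only if $A$ has a $G$-invariant tracial state.
   Context: $T(A)$ is the set of tracial states. For $\xi,\eta\in C_c(G,A)$ set $\langle\xi,\eta\rangle=\sum_g\xi(g)^*\eta(g)$, with $\ell^2(G,A)$ the completion and $\widetilde{\alpha}_g(\xi)(h)=\alpha_g(\xi(g^{-1}h))$; $\|x\|_{2,u}=\sup_{\tau\in T(A)}\tau(x^*x)^{1/2}$ for $x\in A$ and $\|\xi\|_{2,u}=\sup_\tau\tau(\langle\xi,\xi\rangle)^{1/2}$. The action is tracially amenable if for all finite $F\subseteq A$, $K\subseteq G$, $\varepsilon>0$ there is $\xi\in C_c(G,A)$ with $\|\xi\|\le1$, $\|\xi a-a\xi\|_{2,u}<\varepsilon$ ($a\in F$), $\|\langle\xi,\xi\rangle-1\|_{2,u}<\varepsilon$, $\|\widetilde\alpha_g(\xi)-\xi\|_{2,u}<\varepsilon$ ($g\in K$). *)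

theory Defs
  imports "HOL-Analysis.Analysis"
begin

text \<open>A unital C*-algebra: the carrier is a type of class real_normed_algebra_1 and banach
  (complete, submultiplicative norm, norm 1 = 1), equipped with a complex scalar
  multiplication cscale extending the real one, and an involution star satisfying the
  C*-identity.\<close>

definition unital_cstar_algebra :: "('a::{real_normed_algebra_1,banach} \<Rightarrow> 'a) \<Rightarrow> (complex \<Rightarrow> 'a \<Rightarrow> 'a) \<Rightarrow> bool" where
  "unital_cstar_algebra star cscale \<longleftrightarrow>
     (\<forall>r x. cscale (complex_of_real r) x = scaleR r x) \<and>
     (\<forall>c x y. cscale c (x + y) = cscale c x + cscale c y) \<and>
     (\<forall>c d x. cscale (c + d) x = cscale c x + cscale d x) \<and>
     (\<forall>c d x. cscale (c * d) x = cscale c (cscale d x)) \<and>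
     (\<forall>c x y. cscale c (x * y) = cscale c x * y \<and> cscale c (x * y) = x * cscale c y) \<and>
     (\<forall>c x. norm (cscale c x) = cmod c * norm x) \<and>
     (\<forall>x y. star (x + y) = star x + star y) \<and>
     (\<forall>c x. star (cscale c x) = cscale (cnj c) (star x)) \<and>
     (\<forall>x. star (star x) = x) \<and>
     (\<forall>x y. star (x * y) = star y * star x) \<and>
     (\<forall>x. norm (star x * x) = (norm x)\<^sup>2)"

definition clinear_fun :: "(complex \<Rightarrow> 'a::real_vector \<Rightarrow> 'a) \<Rightarrow> ('a \<Rightarrow> complex) \<Rightarrow> bool" where
  "clinear_fun cscale f \<longleftrightarrow> (\<forall>x y. f (x + y) = f x + f y) \<and> (\<forall>c x. f (cscale c x) = c * f x)"

definition tracial_states :: "('a::{real_normed_algebra_1,banach} \<Rightarrow> 'a) \<Rightarrow> (complex \<Rightarrow> 'a \<Rightarrow> 'a) \<Rightarrow> ('a \<Rightarrow> complex) set" where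
  "tracial_states star cscale = {\<tau>. clinear_fun cscale \<tau> \<and>
       (\<forall>x. Im (\<tau> (star x * x)) = 0 \<and> Re (\<tau> (star x * x)) \<ge> 0) \<and>
       \<tau> 1 = 1 \<and> (\<forall>x y. \<tau> (x * y) = \<tau> (y * x))}"

text \<open>An action of the (discrete) group 'g (written additively, not necessarily abelian)
  by *-automorphisms.\<close>
definition cstar_action :: "('a::{real_normed_algebra_1,banach} \<Rightarrow> 'a) \<Rightarrow> (complex \<Rightarrow> 'a \<Rightarrow> 'a) \<Rightarrow> ('g::group_add \<Rightarrow> 'a \<Rightarrow> 'a) \<Rightarrow> bool" where
  "cstar_action star cscale \<alpha> \<longleftrightarrow>
     (\<forall>g. bij (\<alpha> g) \<and>
          (\<forall>x y. \<alpha> g (x + y) = \<alpha> g x + \<alpha> g y) \<and>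
          (\<forall>c x. \<alpha> g (cscale c x) = cscale c (\<alpha> g x)) \<and>
          (\<forall>x y. \<alpha> g (x * y) = \<alpha> g x * \<alpha> g y) \<and>
          (\<forall>x. \<alpha> g (star x) = star (\<alpha> g x))) \<and>
     \<alpha> 0 = id \<and> (\<forall>g h. \<alpha> (g + h) = \<alpha> g \<circ> \<alpha> h)"

definition fsupp :: "('g \<Rightarrow> 'a::zero) \<Rightarrow> 'g set" where
  "fsupp \<xi> = {g. \<xi> g \<noteq> 0}"

definition cc_inner :: "('a::{real_normed_algebra_1} \<Rightarrow> 'a) \<Rightarrow> ('g \<Rightarrow> 'a) \<Rightarrow> ('g \<Rightarrow> 'a) \<Rightarrow> 'a" where
  "cc_inner star \<xi> \<eta> = (\<Sum>g\<in>fsupp \<xi> \<union> fsupp \<eta>. star (\<xi> g) * \<eta> g)"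

text \<open>Uniform 2-seminorm: sup over tracial states of tau(y)^(1/2), applied to y = x* x
  (for x in A) or y = <xi,xi> (for xi in C_c(G,A)).\<close>
definition u2 :: "('a \<Rightarrow> complex) set \<Rightarrow> 'a \<Rightarrow> real" where
  "u2 T y = (SUP \<tau>\<in>T. sqrt (Re (\<tau> y)))"

definition norm2u :: "('a::{real_normed_algebra_1,banach} \<Rightarrow> 'a) \<Rightarrow> (complex \<Rightarrow> 'a \<Rightarrow> 'a) \<Rightarrow> 'a \<Rightarrow> real" where
  "norm2u star cscale x = u2 (tracial_states star cscale) (star x * x)"

definition norm2u_cc :: "('a::{real_normed_algebra_1,banach} \<Rightarrow> 'a) \<Rightarrow> (complex \<Rightarrow> 'a \<Rightarrow> 'a) \<Rightarrow> ('g \<Rightarrow> 'a) \<Rightarrow> real" where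
  "norm2u_cc star cscale \<xi> = u2 (tracial_states star cscale) (cc_inner star \<xi> \<xi>)"

definition tracially_amenable :: "('a::{real_normed_algebra_1,banach} \<Rightarrow> 'a) \<Rightarrow> (complex \<Rightarrow> 'a \<Rightarrow> 'a) \<Rightarrow> ('g::group_add \<Rightarrow> 'a \<Rightarrow> 'a) \<Rightarrow> bool" where
  "tracially_amenable star cscale \<alpha> \<longleftrightarrow>
     (\<forall>F K \<epsilon>. finite (F :: 'a set) \<and> finite (K :: 'g set) \<and> \<epsilon> > (0::real) \<longrightarrow>
        (\<exists>\<xi> :: 'g \<Rightarrow> 'a. finite (fsupp \<xi>) \<and>
           sqrt (norm (cc_inner star \<xi> \<xi>)) \<le> 1 \<and>
           (\<forall>a\<in>F. norm2u_cc star cscale (\<lambda>h. \<xi> h * a - a * \<xi> h) < \<epsilon>) \<and>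
           norm2u star cscale (cc_inner star \<xi> \<xi> - 1) < \<epsilon> \<and>
           (\<forall>g\<in>K. norm2u_cc star cscale (\<lambda>h. \<alpha> g (\<xi> (- g + h)) - \<xi> h) < \<epsilon>)))"

definition bounded_fun :: "('g \<Rightarrow> real) \<Rightarrow> bool" where
  "bounded_fun f \<longleftrightarrow> (\<exists>B. \<forall>x. \<bar>f x\<bar> \<le> B)"

definition amenable_group :: "'g::group_add itself \<Rightarrow> bool" where
  "amenable_group _ \<longleftrightarrow> (\<exists>m :: ('g \<Rightarrow> real) \<Rightarrow> real.
     (\<forall>f h. bounded_fun f \<and> bounded_fun h \<longrightarrow> m (\<lambda>x. f x + h x) = m f + m h) \<and>
     (\<forall>c f. bounded_fun f \<longrightarrow> m (\<lambda>x. c * f x) = c * m f) \<and>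
     (\<forall>f. bounded_fun f \<and> (\<forall>x. f x \<ge> 0) \<longrightarrow> m f \<ge> 0) \<and>
     m (\<lambda>_. 1) = 1 \<and>
     (\<forall>g f. bounded_fun f \<longrightarrow> m (\<lambda>x. f (- g + x)) = m f))"

end

(* If G is amenable, averaging the orbit k |-> tau0 (alpha (-k) x) of a tracial state tau0
   against an invariant mean gives a G-invariant tracial state.
   Conversely, let tau be a G-invariant tracial state and xi a tracially almost invariant
   vector. The weights h |-> tau (xi(h)* xi(h)) have total mass tau <xi, xi>, close to 1, and
   invariance of tau turns the 2-norm estimate for alpha_g(xi) - xi into an l^1 estimate for
   the translates of these weights. This is Reiter's condition, and a cluster point of the
   corresponding weighted means in the compact space of bounded functionals is an invariant
   mean. *)

theory Submission
  imports Defs "HOL-Computational_Algebra.Formal_Power_Series"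
begin

lemma abs_gbinomial_half_le_1: "\<bar>(1/2::real) gchoose n\<bar> \<le> 1"
proof (induction n)
  case (Suc k)
  have "(1/2::real) gchoose Suc k = (1/2 - of_nat k) * (1/2 gchoose k) / (of_nat k + 1)"
    using gbinomial_mult_1[of "1/2::real" k] by (simp add: field_simps)
  moreover have "\<bar>(1/2 - of_nat k) * ((1/2::real) gchoose k)\<bar> \<le> of_nat k + 1"
    using mult_mono[of "\<bar>1/2 - of_nat k\<bar>" "of_nat k + 1" "\<bar>(1/2::real) gchoose k\<bar>" 1] Suc.IH
    by (simp add: abs_mult)
  ultimately show ?case by (simp add: abs_div)
qed simp

definition sqrt_one_minus_coeff :: "nat \<Rightarrow> real" where
  "sqrt_one_minus_coeff n = ((1/2) gchoose n) * (-1) ^ n"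

definition sqrt_one_minus :: "'a::{real_normed_algebra_1,banach} \<Rightarrow> 'a" where
  "sqrt_one_minus h = (\<Sum>n. sqrt_one_minus_coeff n *\<^sub>R h ^ n)"

lemma sqrt_one_minus_coeff_convolution:
  "(\<Sum>i\<le>k. sqrt_one_minus_coeff i * sqrt_one_minus_coeff (k - i)) =
     (if k = 0 then 1 else if k = 1 then -1 else 0)"
proof -
  have "(\<Sum>i\<le>k. sqrt_one_minus_coeff i * sqrt_one_minus_coeff (k - i)) =
      (\<Sum>i\<le>k. ((1/2::real) gchoose i) * (1/2 gchoose (k - i))) * (-1) ^ k"
    unfolding sum_distrib_right sqrt_one_minus_coeff_def
    by (rule sum.cong) (auto simp: algebra_simps simp flip: power_add)
  also have "(\<Sum>i\<le>k. ((1/2::real) gchoose i) * (1/2 gchoose (k - i))) = of_nat (1 choose k)"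
    using gbinomial_Vandermonde[of "1/2::real" "1/2" k] binomial_gbinomial[of 1 k, symmetric]
    by (simp add: atMost_atLeast0)
  finally show ?thesis
    by (cases k) (auto simp: binomial_eq_0)
qed

lemma summable_norm_sqrt_one_minus_series:
  fixes h :: "'a::{real_normed_algebra_1,banach}"
  assumes "norm h < 1"
  shows "summable (\<lambda>n. norm (sqrt_one_minus_coeff n *\<^sub>R h ^ n))"
proof (rule summable_comparison_test)
  have "\<bar>sqrt_one_minus_coeff n\<bar> * norm (h ^ n) \<le> 1 * norm h ^ n" for n
    using abs_gbinomial_half_le_1[of n] norm_power_ineq[of h n]
    by (intro mult_mono) (auto simp: sqrt_one_minus_coeff_def abs_mult)
  then show "\<exists>N. \<forall>n\<ge>N. norm (norm (sqrt_one_minus_coeff n *\<^sub>R h ^ n)) \<le> norm h ^ n"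
    by simp
  show "summable (\<lambda>n. norm h ^ n)"
    using assms by (simp add: summable_geometric)
qed

lemma sqrt_one_minus_square:
  fixes h :: "'a::{real_normed_algebra_1,banach}"
  assumes "norm h < 1"
  shows "sqrt_one_minus h * sqrt_one_minus h = 1 - h"
proof -
  let ?a = "\<lambda>n. sqrt_one_minus_coeff n *\<^sub>R h ^ n"
  have "(\<lambda>k. \<Sum>i\<le>k. ?a i * ?a (k - i)) sums (sqrt_one_minus h * sqrt_one_minus h)"
    unfolding sqrt_one_minus_def
    by (rule Cauchy_product_sums[OF summable_norm_sqrt_one_minus_series[OF assms]
          summable_norm_sqrt_one_minus_series[OF assms]])
  moreover have "(\<Sum>i\<le>k. ?a i * ?a (k - i)) = (if k = 0 then 1 else if k = 1 then - h else 0)" for k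
  proof -
    have "(\<Sum>i\<le>k. ?a i * ?a (k - i)) =
        (\<Sum>i\<le>k. sqrt_one_minus_coeff i * sqrt_one_minus_coeff (k - i)) *\<^sub>R h ^ k"
      unfolding scaleR_sum_left
      by (rule sum.cong) (auto simp flip: power_add)
    then show ?thesis
      by (simp add: sqrt_one_minus_coeff_convolution)
  qed
  ultimately have "(\<lambda>k. if k = 0 then 1 else if k = 1 then - h else 0) sums
      (sqrt_one_minus h * sqrt_one_minus h)"
    by simp
  moreover have "(\<lambda>k. if k = 0 then 1 else if k = 1 then - h else 0) sums (1 - h)"
    using sums_finite[of "{0, 1}" "\<lambda>k. if k = 0 then 1 else if k = 1 then - h else 0"] by simp
  ultimately show ?thesis
    using sums_unique2 by blast
qed

locale cstar_algebra =
  fixes star :: "'a::{real_normed_algebra_1,banach} \<Rightarrow> 'a"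
    and cscale :: "complex \<Rightarrow> 'a \<Rightarrow> 'a"
  assumes unital_cstar_algebra: "unital_cstar_algebra star cscale"
begin

lemma cscale_of_real: "cscale (complex_of_real r) x = r *\<^sub>R x"
  and cscale_add: "cscale c (x + y) = cscale c x + cscale c y"
  and cscale_cscale: "cscale c (cscale d x) = cscale (c * d) x"
  and cscale_mult_left: "cscale c (x * y) = cscale c x * y"
  and cscale_mult_right: "cscale c (x * y) = x * cscale c y"
  and norm_cscale: "norm (cscale c x) = cmod c * norm x"
  and star_add: "star (x + y) = star x + star y"
  and star_cscale: "star (cscale c x) = cscale (cnj c) (star x)"
  and star_star [simp]: "star (star x) = x"
  and star_mult: "star (x * y) = star y * star x"
  and norm_star_mult_self: "norm (star x * x) = (norm x)\<^sup>2"
  using unital_cstar_algebra unfolding unital_cstar_algebra_def by metis+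

lemma star_zero [simp]: "star 0 = 0"
  using star_add[of 0 0] by simp

lemma star_minus: "star (- x) = - star x"
  using star_add[of "- x" x] by (simp add: add_eq_0_iff2)

lemma star_diff: "star (x - y) = star x - star y"
  using star_add[of x "- y"] by (simp add: star_minus)

lemma star_scaleR: "star (r *\<^sub>R x) = r *\<^sub>R star x"
  using star_cscale[of "complex_of_real r" x] by (simp add: cscale_of_real)

lemma star_one [simp]: "star 1 = 1"
  using star_mult[of "star 1" 1] by simp

lemma star_power: "star h = h \<Longrightarrow> star (h ^ n) = h ^ n"
  by (induction n) (auto simp: star_mult power_commutes)

lemma norm_star [simp]: "norm (star x) = norm x"
proof -
  have "norm y \<le> norm (star y)" for y
  proof (cases "y = 0")
    case False
    have "(norm y)\<^sup>2 \<le> norm (star y) * norm y"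
      using norm_star_mult_self[of y] norm_mult_ineq[of "star y" y] by simp
    with False show ?thesis
      by (simp add: power2_eq_square)
  qed simp
  from this[of x] this[of "star x"] show ?thesis
    by simp
qed

lemma bounded_linear_star: "bounded_linear star"
  by (rule bounded_linear_intro[where K = 1]) (auto simp: star_add star_scaleR)

lemma star_sqrt_one_minus:
  assumes "star h = h" and "norm h < 1"
  shows "star (sqrt_one_minus h) = sqrt_one_minus h"
proof -
  have "summable (\<lambda>n. sqrt_one_minus_coeff n *\<^sub>R h ^ n)"
    using summable_norm_cancel[OF summable_norm_sqrt_one_minus_series[OF assms(2)]] .
  from bounded_linear.suminf[OF bounded_linear_star this] show ?thesis
    unfolding sqrt_one_minus_def by (simp add: star_scaleR star_power[OF assms(1)])
qed

abbreviation traces where "traces \<equiv> tracial_states star cscale"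

definition trace_weight :: "('a \<Rightarrow> complex) \<Rightarrow> ('g \<Rightarrow> 'a) \<Rightarrow> 'g \<Rightarrow> real" where
  "trace_weight \<tau> \<xi> h = Re (\<tau> (star (\<xi> h) * \<xi> h))"

context
  fixes \<tau> assumes trace: "\<tau> \<in> traces"
begin

lemma trace_add: "\<tau> (x + y) = \<tau> x + \<tau> y"
  and trace_cscale: "\<tau> (cscale c x) = c * \<tau> x"
  and trace_one: "\<tau> 1 = 1"
  and trace_commute: "\<tau> (x * y) = \<tau> (y * x)"
  and Im_trace_star_mult_self: "Im (\<tau> (star x * x)) = 0"
  and Re_trace_star_mult_self: "Re (\<tau> (star x * x)) \<ge> 0"
  using trace unfolding tracial_states_def clinear_fun_def by blast+

lemma trace_zero: "\<tau> 0 = 0"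
  using trace_add[of 0 0] by simp

lemma trace_diff: "\<tau> (x - y) = \<tau> x - \<tau> y"
  using trace_add[of "x - y" y] by simp

lemma trace_minus: "\<tau> (- x) = - \<tau> x"
  using trace_diff[of 0 x] by (simp add: trace_zero)

lemma trace_scaleR: "\<tau> (r *\<^sub>R x) = complex_of_real r * \<tau> x"
  using trace_cscale[of "complex_of_real r" x] by (simp add: cscale_of_real)

lemma trace_sum: "\<tau> (sum f S) = (\<Sum>i\<in>S. \<tau> (f i))"
  by (induction S rule: infinite_finite_induct) (auto simp: trace_add trace_zero)

lemma trace_star: "\<tau> (star x) = cnj (\<tau> x)"
proof -
  have expand: "star (x + cscale c 1) * (x + cscale c 1) =
      star x * x + cscale c (star x) + cscale (cnj c) x + cscale (cnj c * c) 1" for c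
    by (simp add: star_add star_cscale algebra_simps cscale_cscale cscale_add
        flip: cscale_mult_left cscale_mult_right)
  have "Im (\<tau> (star x * x) + c * \<tau> (star x) + cnj c * \<tau> x + cnj c * c) = 0" for c
    using Im_trace_star_mult_self[of "x + cscale c 1"]
    by (simp add: expand trace_add trace_cscale trace_one)
  from this[of 1] this[of \<i>] show ?thesis
    using Im_trace_star_mult_self[of x] by (simp add: complex_eq_iff)
qed

lemma Re_trace_star_mult_le:
  "2 * Re (\<tau> (star u * v)) \<le> Re (\<tau> (star u * u)) + Re (\<tau> (star v * v))"
proof -
  have "star (u - v) * (u - v) = star u * u - star u * v - star (star u * v) + star v * v"
    by (simp add: star_diff star_mult algebra_simps)
  then have "Re (\<tau> (star (u - v) * (u - v))) =
      Re (\<tau> (star u * u)) - 2 * Re (\<tau> (star u * v)) + Re (\<tau> (star v * v))"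
    by (simp add: trace_add trace_diff trace_star)
  with Re_trace_star_mult_self[of "u - v"] show ?thesis
    by linarith
qed

(* 1 - a / (2 norm a) is a square s* s, with s given by the binomial series, so positivity
   of tau bounds tau a. *)
lemma Re_trace_selfadjoint_le:
  assumes "star a = a"
  shows "Re (\<tau> a) \<le> 2 * norm a"
proof (cases "a = 0")
  case False
  define h where "h = (1 / (2 * norm a)) *\<^sub>R a"
  have "star h = h" and "norm h < 1"
    using assms False by (simp_all add: h_def star_scaleR)
  then have "star (sqrt_one_minus h) * sqrt_one_minus h = 1 - h"
    by (simp add: star_sqrt_one_minus sqrt_one_minus_square)
  then have "Re (\<tau> h) \<le> 1"
    using Re_trace_star_mult_self[of "sqrt_one_minus h"]
    by (simp add: trace_diff trace_one)
  with False show ?thesis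
    by (simp add: h_def trace_scaleR field_simps)
qed (simp add: trace_zero)

lemma norm_trace_le: "cmod (\<tau> x) \<le> 4 * norm x"
proof -
  have abs_Re: "\<bar>Re (\<tau> y)\<bar> \<le> 2 * norm y" for y
  proof -
    define a where "a = (1/2) *\<^sub>R (y + star y)"
    have "star a = a" and "star (- a) = - a"
      by (simp_all add: a_def star_scaleR star_add star_minus add.commute)
    moreover have "Re (\<tau> a) = Re (\<tau> y)"
      by (simp add: a_def trace_scaleR trace_add trace_star)
    moreover have "norm a \<le> norm y"
      using norm_triangle_ineq[of y "star y"] by (simp add: a_def)
    ultimately show ?thesis
      using Re_trace_selfadjoint_le[of a] Re_trace_selfadjoint_le[of "- a"]
      by (simp add: trace_minus)
  qed
  have "Im (\<tau> x) = Re (\<tau> (cscale (- \<i>) x))"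
    by (simp add: trace_cscale)
  then have "\<bar>Im (\<tau> x)\<bar> \<le> 2 * norm x"
    using abs_Re[of "cscale (- \<i>) x"] by (simp add: norm_cscale)
  with abs_Re[of x] cmod_le[of "\<tau> x"] show ?thesis
    by linarith
qed

lemma Re_trace_square_le: "(Re (\<tau> y))\<^sup>2 \<le> Re (\<tau> (star y * y))"
proof -
  let ?t = "Re (\<tau> y)"
  have "2 * Re (\<tau> (star (?t *\<^sub>R 1) * y)) \<le>
      Re (\<tau> (star (?t *\<^sub>R 1) * (?t *\<^sub>R 1))) + Re (\<tau> (star y * y))"
    by (rule Re_trace_star_mult_le)
  then show ?thesis
    by (simp add: star_scaleR trace_scaleR trace_one power2_eq_square)
qed

lemma Re_trace_star_mult_self_diff_le:
  assumes e: "e > 0"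
  shows "\<bar>Re (\<tau> (star a * a)) - Re (\<tau> (star b * b))\<bar> \<le>
         (1 + 1 / e) * Re (\<tau> (star (a - b) * (a - b))) + e * Re (\<tau> (star b * b))"
proof -
  define d where "d = a - b"
  let ?D = "Re (\<tau> (star d * d))" and ?B = "Re (\<tau> (star b * b))" and ?X = "Re (\<tau> (star d * b))"
  have "star a * a - star b * b = star d * d + star d * b + star (star d * b)"
    by (simp add: d_def star_diff star_mult algebra_simps)
  then have "\<tau> (star a * a) - \<tau> (star b * b) =
      \<tau> (star d * d) + \<tau> (star d * b) + cnj (\<tau> (star d * b))"
    by (simp add: trace_add trace_star flip: trace_diff)
  then have "Re (\<tau> (star a * a) - \<tau> (star b * b)) =
      Re (\<tau> (star d * d) + \<tau> (star d * b) + cnj (\<tau> (star d * b)))"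
    by (rule arg_cong)
  then have diff: "Re (\<tau> (star a * a)) - Re (\<tau> (star b * b)) = ?D + 2 * ?X"
    by simp
  \<comment> \<open>AM-GM for the cross term, applied to d and - d\<close>
  have "2 * (e * ?X) \<le> ?D + e\<^sup>2 * ?B"
    using Re_trace_star_mult_le[of d "e *\<^sub>R b"]
    by (simp add: star_scaleR trace_scaleR power2_eq_square mult.assoc)
  moreover have "- (2 * (e * ?X)) \<le> ?D + e\<^sup>2 * ?B"
    using Re_trace_star_mult_le[of "- d" "e *\<^sub>R b"]
    by (simp add: star_scaleR star_minus trace_scaleR trace_minus
        power2_eq_square mult.assoc)
  moreover have "\<bar>2 * (e * ?X)\<bar> = e * (2 * \<bar>?X\<bar>)"
    using e by (simp add: abs_mult)
  ultimately have "e * (2 * \<bar>?X\<bar>) \<le> e * (?D / e + e * ?B)"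
    using e by (simp add: algebra_simps power2_eq_square)
  then have "2 * \<bar>?X\<bar> \<le> ?D / e + e * ?B"
    using e by simp
  moreover have "(1 + 1 / e) * ?D = ?D + ?D / e"
    by (simp add: algebra_simps)
  ultimately show ?thesis
    using diff Re_trace_star_mult_self[of d] unfolding d_def by linarith
qed

lemma trace_weight_nonneg: "trace_weight \<tau> \<xi> h \<ge> 0"
  by (simp add: trace_weight_def Re_trace_star_mult_self)

lemma trace_weight_eq_0: "\<xi> h = 0 \<Longrightarrow> trace_weight \<tau> \<xi> h = 0"
  by (simp add: trace_weight_def trace_zero)

lemma Re_trace_cc_inner:
  assumes "finite W" and "fsupp \<xi> \<subseteq> W"
  shows "Re (\<tau> (cc_inner star \<xi> \<xi>)) = sum (trace_weight \<tau> \<xi>) W"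
  unfolding cc_inner_def trace_sum Re_sum Un_absorb trace_weight_def
  using assms by (intro sum.mono_neutral_left) (auto simp: fsupp_def trace_zero)

end

lemma sqrt_Re_trace_le_u2:
  assumes "\<tau> \<in> traces"
  shows "sqrt (Re (\<tau> z)) \<le> u2 traces z"
proof -
  have "bdd_above ((\<lambda>\<sigma>. sqrt (Re (\<sigma> z))) ` traces)"
  proof (rule bdd_aboveI2)
    fix \<sigma> assume "\<sigma> \<in> traces"
    then have "Re (\<sigma> z) \<le> 4 * norm z"
      using norm_trace_le complex_Re_le_cmod order_trans by blast
    then show "sqrt (Re (\<sigma> z)) \<le> sqrt (4 * norm z)"
      by simp
  qed
  then show ?thesis
    unfolding u2_def by (rule cSUP_upper[OF assms])
qed

lemma abs_Re_trace_le_norm2u: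
  assumes "\<tau> \<in> traces"
  shows "\<bar>Re (\<tau> y)\<bar> \<le> norm2u star cscale y"
proof -
  have "\<bar>Re (\<tau> y)\<bar> = sqrt ((Re (\<tau> y))\<^sup>2)"
    by simp
  also have "\<dots> \<le> sqrt (Re (\<tau> (star y * y)))"
    by (rule real_sqrt_le_mono[OF Re_trace_square_le[OF assms]])
  also have "\<dots> \<le> norm2u star cscale y"
    unfolding norm2u_def by (rule sqrt_Re_trace_le_u2[OF assms])
  finally show ?thesis .
qed

lemma Re_trace_cc_inner_less_square:
  assumes "\<tau> \<in> traces" and "norm2u_cc star cscale \<xi> < \<delta>"
  shows "Re (\<tau> (cc_inner star \<xi> \<xi>)) < \<delta>\<^sup>2"
proof -
  let ?r = "Re (\<tau> (cc_inner star \<xi> \<xi>))"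
  have "0 \<le> ?r"
    unfolding cc_inner_def
    by (subst trace_sum[OF assms(1)], subst Re_sum)
      (intro sum_nonneg Re_trace_star_mult_self[OF assms(1)])
  moreover have "sqrt ?r < \<delta>"
    using sqrt_Re_trace_le_u2[OF assms(1)] assms(2) unfolding norm2u_cc_def by (rule le_less_trans)
  ultimately have "(sqrt ?r)\<^sup>2 < \<delta>\<^sup>2"
    by (intro power_strict_mono) simp_all
  with \<open>0 \<le> ?r\<close> show ?thesis
    by simp
qed

end

definition is_mean :: "(('g \<Rightarrow> real) \<Rightarrow> real) \<Rightarrow> bool" where
  "is_mean m \<longleftrightarrow>
     (\<forall>f h. bounded_fun f \<and> bounded_fun h \<longrightarrow> m (\<lambda>x. f x + h x) = m f + m h) \<and>
     (\<forall>c f. bounded_fun f \<longrightarrow> m (\<lambda>x. c * f x) = c * m f) \<and>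
     (\<forall>f. bounded_fun f \<and> (\<forall>x. f x \<ge> 0) \<longrightarrow> m f \<ge> 0) \<and>
     m (\<lambda>_. 1) = 1"

definition left_invariant :: "(('g::group_add \<Rightarrow> real) \<Rightarrow> real) \<Rightarrow> bool" where
  "left_invariant m \<longleftrightarrow> (\<forall>g f. bounded_fun f \<longrightarrow> m (\<lambda>x. f (- g + x)) = m f)"

lemma left_invariantD: "left_invariant m \<Longrightarrow> bounded_fun f \<Longrightarrow> m (\<lambda>x. f (- g + x)) = m f"
  unfolding left_invariant_def by blast

lemma left_invariantI_approx:
  fixes m :: "('g::group_add \<Rightarrow> real) \<Rightarrow> real"
  assumes "\<And>g f \<delta>. bounded_fun f \<Longrightarrow> \<delta> > 0 \<Longrightarrow> \<bar>m (\<lambda>x. f (- g + x)) - m f\<bar> \<le> \<delta>"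
  shows "left_invariant m"
  unfolding left_invariant_def
proof (intro allI impI)
  fix g and f :: "'g \<Rightarrow> real" assume "bounded_fun f"
  have "\<bar>m (\<lambda>x. f (- g + x)) - m f\<bar> \<le> 0"
    using assms[OF \<open>bounded_fun f\<close>] by (rule field_le_epsilon) simp
  then show "m (\<lambda>x. f (- g + x)) = m f"
    by simp
qed

lemma amenable_group_iff_invariant_mean:
  "amenable_group TYPE('g::group_add) \<longleftrightarrow>
     (\<exists>m::('g \<Rightarrow> real) \<Rightarrow> real. is_mean m \<and> left_invariant m)"
  unfolding amenable_group_def is_mean_def left_invariant_def by blast

lemma bounded_fun_add: "bounded_fun f \<Longrightarrow> bounded_fun h \<Longrightarrow> bounded_fun (\<lambda>x. f x + h x)"
  unfolding bounded_fun_def by (meson abs_triangle_ineq add_mono order_trans)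

lemma bounded_fun_cmult: "bounded_fun f \<Longrightarrow> bounded_fun (\<lambda>x. c * f x)"
  unfolding bounded_fun_def by (metis abs_mult abs_ge_zero mult_left_mono)

lemma bounded_fun_const: "bounded_fun (\<lambda>_. c)"
  unfolding bounded_fun_def by blast

lemma bounded_fun_comp: "bounded_fun f \<Longrightarrow> bounded_fun (\<lambda>x. f (\<phi> x))"
  unfolding bounded_fun_def by blast

lemma bounded_fun_Re: "bounded (range F) \<Longrightarrow> bounded_fun (\<lambda>x. Re (F x))"
  and bounded_fun_Im: "bounded (range F) \<Longrightarrow> bounded_fun (\<lambda>x. Im (F x))"
  unfolding bounded_fun_def bounded_iff
  by (meson abs_Re_le_cmod abs_Im_le_cmod order_trans rangeI)+

definition complex_mean :: "(('g \<Rightarrow> real) \<Rightarrow> real) \<Rightarrow> ('g \<Rightarrow> complex) \<Rightarrow> complex" where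
  "complex_mean m F = Complex (m (\<lambda>x. Re (F x))) (m (\<lambda>x. Im (F x)))"

context
  fixes m :: "('g \<Rightarrow> real) \<Rightarrow> real"
  assumes mean: "is_mean m"
begin

lemma mean_add: "bounded_fun f \<Longrightarrow> bounded_fun h \<Longrightarrow> m (\<lambda>x. f x + h x) = m f + m h"
  and mean_cmult: "bounded_fun f \<Longrightarrow> m (\<lambda>x. c * f x) = c * m f"
  and mean_nonneg: "bounded_fun f \<Longrightarrow> (\<And>x. f x \<ge> 0) \<Longrightarrow> m f \<ge> 0"
  and mean_one: "m (\<lambda>_. 1) = 1"
  using mean unfolding is_mean_def by blast+

lemma mean_zero: "m (\<lambda>_. 0) = 0"
  using mean_cmult[OF bounded_fun_const, of 0 1] by simp

lemma mean_lincomb: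
  "bounded_fun f \<Longrightarrow> bounded_fun h \<Longrightarrow> m (\<lambda>x. a * f x + b * h x) = a * m f + b * m h"
  by (simp add: mean_add mean_cmult bounded_fun_cmult)

lemma complex_mean_add:
  assumes "bounded (range F)" and "bounded (range G)"
  shows "complex_mean m (\<lambda>x. F x + G x) = complex_mean m F + complex_mean m G"
  using assms
  by (simp add: complex_mean_def complex_eq_iff mean_add bounded_fun_Re bounded_fun_Im)

lemma complex_mean_mult:
  assumes "bounded (range F)"
  shows "complex_mean m (\<lambda>x. c * F x) = c * complex_mean m F"
proof -
  note lincomb = mean_lincomb[OF bounded_fun_Re[OF assms] bounded_fun_Im[OF assms]]
  have "(\<lambda>x. Re (c * F x)) = (\<lambda>x. Re c * Re (F x) + (- Im c) * Im (F x))"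
    and "(\<lambda>x. Im (c * F x)) = (\<lambda>x. Im c * Re (F x) + Re c * Im (F x))"
    by (simp_all add: algebra_simps)
  then show ?thesis
    unfolding complex_mean_def by (simp only: lincomb) (simp add: complex_eq_iff)
qed

lemma complex_mean_one: "complex_mean m (\<lambda>_. 1) = 1"
  by (simp add: complex_mean_def complex_eq_iff mean_one mean_zero)

lemma complex_mean_nonneg:
  assumes "bounded (range F)" and "\<And>x. Im (F x) = 0" and "\<And>x. Re (F x) \<ge> 0"
  shows "Im (complex_mean m F) = 0" and "Re (complex_mean m F) \<ge> 0"
  using assms mean_nonneg[OF bounded_fun_Re[OF assms(1)]]
  by (simp_all add: complex_mean_def mean_zero)

end

lemma complex_mean_translate:
  fixes m :: "('g::group_add \<Rightarrow> real) \<Rightarrow> real"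
  assumes "left_invariant m" and "bounded (range F)"
  shows "complex_mean m (\<lambda>x. F (- g + x)) = complex_mean m F"
  using left_invariantD[OF assms(1) bounded_fun_Re[OF assms(2)], of g]
    left_invariantD[OF assms(1) bounded_fun_Im[OF assms(2)], of g]
  by (simp add: complex_mean_def)

(* Reiter's condition. S together with - g + S contains the supports of mu and of mu (g + _),
   so the sum is the l^1 distance between them. *)
definition reiter_property :: "'g::group_add itself \<Rightarrow> bool" where
  "reiter_property _ \<longleftrightarrow> (\<forall>K \<epsilon>. finite (K :: 'g set) \<and> \<epsilon> > 0 \<longrightarrow>
     (\<exists>(\<mu> :: 'g \<Rightarrow> real) S. finite S \<and> (\<forall>h. h \<notin> S \<longrightarrow> \<mu> h = 0) \<and> (\<forall>h. \<mu> h \<ge> 0) \<and>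
        sum \<mu> S = 1 \<and> (\<forall>g\<in>K. (\<Sum>h\<in>S \<union> (\<lambda>x. - g + x) ` S. \<bar>\<mu> (g + h) - \<mu> h\<bar>) \<le> \<epsilon>)))"

definition fun_bound :: "('g \<Rightarrow> real) \<Rightarrow> real" where
  "fun_bound f = (if bounded_fun f then (SUP x. \<bar>f x\<bar>) else 0)"

lemma abs_le_fun_bound:
  assumes "bounded_fun f"
  shows "\<bar>f x\<bar> \<le> fun_bound f"
proof -
  obtain B where "\<And>x. \<bar>f x\<bar> \<le> B"
    using assms unfolding bounded_fun_def by blast
  then have "bdd_above (range (\<lambda>x. \<bar>f x\<bar>))"
    by (rule bdd_aboveI2)
  with assms show ?thesis
    by (simp add: fun_bound_def) (rule cSUP_upper[OF UNIV_I])
qed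

lemma fun_bound_nonneg: "fun_bound f \<ge> 0"
proof (cases "bounded_fun f")
  case True
  show ?thesis
    using order_trans[OF abs_ge_zero abs_le_fun_bound[OF True]] .
qed (simp add: fun_bound_def)

(* The value 0 on unbounded functions keeps weighted means inside the compact set of
   functionals bounded by fun_bound. *)
definition weighted_mean :: "('g \<Rightarrow> real) \<Rightarrow> 'g set \<Rightarrow> ('g \<Rightarrow> real) \<Rightarrow> real" where
  "weighted_mean \<mu> S f = (if bounded_fun f then (\<Sum>x\<in>S. f x * \<mu> x) else 0)"

context
  fixes \<mu> :: "'g \<Rightarrow> real" and S :: "'g set"
  assumes nonneg: "\<And>x. \<mu> x \<ge> 0" and sum_one: "sum \<mu> S = 1"
begin

lemma is_mean_weighted_mean: "is_mean (weighted_mean \<mu> S)"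
  using nonneg sum_one
  by (auto simp: is_mean_def weighted_mean_def bounded_fun_add bounded_fun_cmult bounded_fun_const
      sum.distrib sum_distrib_left distrib_right mult.assoc intro: sum_nonneg)

lemma abs_weighted_mean_le: "\<bar>weighted_mean \<mu> S f\<bar> \<le> fun_bound f"
proof (cases "bounded_fun f")
  case True
  have "\<bar>\<Sum>x\<in>S. f x * \<mu> x\<bar> \<le> (\<Sum>x\<in>S. fun_bound f * \<mu> x)"
    using abs_le_fun_bound[OF True] nonneg
    by (intro order_trans[OF sum_abs] sum_mono) (simp add: abs_mult mult_right_mono)
  with True sum_one show ?thesis
    by (simp add: weighted_mean_def flip: sum_distrib_left)
qed (simp add: weighted_mean_def fun_bound_nonneg)

end

lemma weighted_mean_translate_diff_le:
  fixes \<mu> :: "'g::group_add \<Rightarrow> real"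
  assumes "finite S" and "\<And>h. h \<notin> S \<Longrightarrow> \<mu> h = 0" and "bounded_fun f"
  shows "\<bar>weighted_mean \<mu> S (\<lambda>x. f (- g + x)) - weighted_mean \<mu> S f\<bar> \<le>
          fun_bound f * (\<Sum>h\<in>S \<union> (\<lambda>x. - g + x) ` S. \<bar>\<mu> (g + h) - \<mu> h\<bar>)"
proof -
  define W where "W = S \<union> (\<lambda>x. - g + x) ` S"
  have "finite W"
    using assms(1) by (simp add: W_def)
  have "(\<Sum>x\<in>S. f (- g + x) * \<mu> x) = (\<Sum>h\<in>(\<lambda>x. - g + x) ` S. f h * \<mu> (g + h))"
    by (simp add: sum.reindex inj_on_def add.assoc[symmetric])
  also have "\<dots> = (\<Sum>h\<in>W. f h * \<mu> (g + h))"
  proof (intro sum.mono_neutral_left ballI)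
    fix h assume "h \<in> W - (\<lambda>x. - g + x) ` S"
    then have "g + h \<notin> S"
      by (metis Diff_iff image_eqI minus_add_cancel)
    then show "f h * \<mu> (g + h) = 0"
      by (simp add: assms(2))
  qed (use \<open>finite W\<close> in \<open>auto simp: W_def\<close>)
  finally have translated: "(\<Sum>x\<in>S. f (- g + x) * \<mu> x) = (\<Sum>h\<in>W. f h * \<mu> (g + h))" .
  have "(\<Sum>x\<in>S. f x * \<mu> x) = (\<Sum>h\<in>W. f h * \<mu> h)"
    using \<open>finite W\<close> assms(2) by (intro sum.mono_neutral_left) (auto simp: W_def)
  with translated
  have "\<bar>weighted_mean \<mu> S (\<lambda>x. f (- g + x)) - weighted_mean \<mu> S f\<bar> =
      \<bar>\<Sum>h\<in>W. f h * (\<mu> (g + h) - \<mu> h)\<bar>"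
    using assms(3) bounded_fun_comp[OF assms(3), of "\<lambda>x. - g + x"]
    by (simp add: weighted_mean_def algebra_simps sum_subtractf)
  also have "\<dots> \<le> (\<Sum>h\<in>W. fun_bound f * \<bar>\<mu> (g + h) - \<mu> h\<bar>)"
    using abs_le_fun_bound[OF assms(3)]
    by (intro order_trans[OF sum_abs] sum_mono) (simp add: abs_mult mult_right_mono)
  finally show ?thesis
    by (simp add: W_def sum_distrib_left)
qed

lemma compact_fun_bound_box: "compact {m :: ('g \<Rightarrow> real) \<Rightarrow> real. \<forall>f. \<bar>m f\<bar> \<le> fun_bound f}"
proof -
  have "{m :: ('g \<Rightarrow> real) \<Rightarrow> real. \<forall>f. \<bar>m f\<bar> \<le> fun_bound f} =
      PiE UNIV (\<lambda>f. {- fun_bound f .. fun_bound f})"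
    by (auto simp: PiE_def extensional_def abs_le_iff minus_le_iff)
  moreover have "compactin (product_topology (\<lambda>_. euclidean) UNIV)
      (PiE UNIV (\<lambda>f::'g \<Rightarrow> real. {- fun_bound f .. fun_bound f}))"
    by (simp add: compactin_PiE)
  ultimately show ?thesis
    by (simp add: euclidean_product_topology)
qed

lemma closed_is_mean: "closed {m :: ('g \<Rightarrow> real) \<Rightarrow> real. is_mean m}"
  unfolding is_mean_def
  by (intro closed_Collect_conj closed_Collect_all closed_Collect_imp open_Collect_const
      closed_Collect_eq closed_Collect_le continuous_intros continuous_on_product_coordinates)

lemma closed_almost_invariant:
  "closed {m :: ('g::group_add \<Rightarrow> real) \<Rightarrow> real. \<bar>m (\<lambda>x. f (- g + x)) - m f\<bar> \<le> \<delta>}"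
  by (intro closed_Collect_le continuous_intros continuous_on_product_coordinates)

lemma almost_invariant_weighted_mean:
  fixes P :: "('g::group_add \<times> ('g \<Rightarrow> real) \<times> real) set"
  assumes reiter: "reiter_property TYPE('g)" and "finite P"
    and P: "\<And>g f \<delta>. (g, f, \<delta>) \<in> P \<Longrightarrow> bounded_fun f \<and> \<delta> > 0"
  shows "\<exists>\<mu> S. (\<forall>x. \<mu> x \<ge> 0) \<and> sum \<mu> S = 1 \<and>
           (\<forall>(g, f, \<delta>)\<in>P. \<bar>weighted_mean \<mu> S (\<lambda>x. f (- g + x)) - weighted_mean \<mu> S f\<bar> \<le> \<delta>)"
proof -
  define D where "D = Min (insert 1 ((\<lambda>(g, f, \<delta>). \<delta>) ` P))"
  define M where "M = 1 + (\<Sum>(g, f, \<delta>)\<in>P. fun_bound f)"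
  have "D > 0"
    using assms(2) P by (auto simp: D_def Min_gr_iff)
  have "M \<ge> 1"
    by (auto simp: M_def fun_bound_nonneg intro: sum_nonneg)
  have K_\<epsilon>: "finite (fst ` P) \<and> D / M > 0"
    using assms(2) \<open>D > 0\<close> \<open>M \<ge> 1\<close> by simp
  obtain \<mu> :: "'g \<Rightarrow> real" and S where "finite S" and \<mu>: "\<And>h. h \<notin> S \<Longrightarrow> \<mu> h = 0"
    "\<forall>x. \<mu> x \<ge> 0" "sum \<mu> S = 1"
    and small: "\<forall>g\<in>fst ` P. (\<Sum>h\<in>S \<union> (\<lambda>x. - g + x) ` S. \<bar>\<mu> (g + h) - \<mu> h\<bar>) \<le> D / M"
    using reiter[unfolded reiter_property_def, rule_format, OF K_\<epsilon>] by blast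
  have "\<bar>weighted_mean \<mu> S (\<lambda>x. f (- g + x)) - weighted_mean \<mu> S f\<bar> \<le> \<delta>"
    if "(g, f, \<delta>) \<in> P" for g f \<delta>
  proof -
    have "fun_bound f \<le> M - 1"
      using member_le_sum[OF that, of "\<lambda>(g, f, \<delta>). fun_bound f"] assms(2)
      by (auto simp: M_def fun_bound_nonneg)
    have "D \<le> \<delta>"
      using that assms(2) by (auto simp: D_def intro!: Min_le image_eqI[where x = "(g, f, \<delta>)"])
    have "g \<in> fst ` P"
      using that by (rule rev_image_eqI) simp
    have "\<bar>weighted_mean \<mu> S (\<lambda>x. f (- g + x)) - weighted_mean \<mu> S f\<bar> \<le>
        fun_bound f * (\<Sum>h\<in>S \<union> (\<lambda>x. - g + x) ` S. \<bar>\<mu> (g + h) - \<mu> h\<bar>)"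
      using P[OF that] by (intro weighted_mean_translate_diff_le) (simp_all add: \<open>finite S\<close> \<mu>(1))
    also have "\<dots> \<le> fun_bound f * (D / M)"
      using small \<open>g \<in> fst ` P\<close> fun_bound_nonneg by (intro mult_left_mono) blast+
    also have "\<dots> \<le> M * (D / M)"
      using \<open>fun_bound f \<le> M - 1\<close> \<open>D > 0\<close> \<open>M \<ge> 1\<close> by (intro mult_right_mono) auto
    also have "\<dots> \<le> \<delta>"
      using \<open>M \<ge> 1\<close> \<open>D \<le> \<delta>\<close> by simp
    finally show ?thesis .
  qed
  with \<mu> show ?thesis
    by blast
qed

lemma reiter_property_imp_amenable:
  assumes "reiter_property TYPE('g::group_add)"
  shows "amenable_group TYPE('g)"
proof -
  define B where "B = {m :: ('g \<Rightarrow> real) \<Rightarrow> real. \<forall>f. \<bar>m f\<bar> \<le> fun_bound f} \<inter> {m. is_mean m}"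
  define A where "A = (\<lambda>(g, f, \<delta>). {m :: ('g \<Rightarrow> real) \<Rightarrow> real. \<bar>m (\<lambda>x. f (- g + x)) - m f\<bar> \<le> \<delta>})"
  define I where "I = {(g :: 'g, f :: 'g \<Rightarrow> real, \<delta> :: real). bounded_fun f \<and> \<delta> > 0}"
  have "B \<inter> (\<Inter>i\<in>I. A i) \<noteq> {}"
  proof (rule compact_imp_fip_image)
    show "compact B"
      unfolding B_def by (intro compact_Int_closed compact_fun_bound_box closed_is_mean)
    show "closed (A i)" for i
      by (simp add: A_def closed_almost_invariant split: prod.split)
    fix I' assume "finite I'" and "I' \<subseteq> I"
    then obtain \<mu> S where "\<forall>x. \<mu> x \<ge> 0" "sum \<mu> S = 1"
      and "\<forall>(g, f, \<delta>)\<in>I'. \<bar>weighted_mean \<mu> S (\<lambda>x. f (- g + x)) - weighted_mean \<mu> S f\<bar> \<le> \<delta>"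
      using almost_invariant_weighted_mean[OF assms, of I'] by (auto simp: I_def)
    then have "weighted_mean \<mu> S \<in> B \<inter> (\<Inter>i\<in>I'. A i)"
      by (auto simp: B_def A_def is_mean_weighted_mean abs_weighted_mean_le)
    then show "B \<inter> (\<Inter>i\<in>I'. A i) \<noteq> {}"
      by blast
  qed
  then obtain m where "m \<in> B" and in_A: "\<And>i. i \<in> I \<Longrightarrow> m \<in> A i"
    by blast
  then have "is_mean m"
    by (simp add: B_def)
  have "left_invariant m"
  proof (rule left_invariantI_approx)
    fix g and f :: "'g \<Rightarrow> real" and \<delta> :: real
    assume "bounded_fun f" and "\<delta> > 0"
    then show "\<bar>m (\<lambda>x. f (- g + x)) - m f\<bar> \<le> \<delta>"
      using in_A[of "(g, f, \<delta>)"] by (simp add: A_def I_def)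
  qed
  with \<open>is_mean m\<close> show ?thesis
    using amenable_group_iff_invariant_mean by blast
qed

lemma fsupp_translate:
  fixes \<xi> :: "'g::group_add \<Rightarrow> 'a::zero"
  shows "fsupp (\<lambda>h. \<xi> (g + h)) = (\<lambda>x. - g + x) ` fsupp \<xi>"
  unfolding fsupp_def
proof (intro equalityI subsetI)
  fix h assume "h \<in> {h. \<xi> (g + h) \<noteq> 0}"
  then show "h \<in> (\<lambda>x. - g + x) ` {h. \<xi> h \<noteq> 0}"
    by (intro image_eqI[of h _ "g + h"]) (simp_all add: add.assoc[symmetric])
qed auto

locale cstar_group_action = cstar_algebra star cscale
  for star :: "'a::{real_normed_algebra_1,banach} \<Rightarrow> 'a" and cscale +
  fixes \<alpha> :: "'g::group_add \<Rightarrow> 'a \<Rightarrow> 'a"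
  assumes cstar_action: "cstar_action star cscale \<alpha>"
begin

lemma action_add: "\<alpha> g (x + y) = \<alpha> g x + \<alpha> g y"
  and action_cscale: "\<alpha> g (cscale c x) = cscale c (\<alpha> g x)"
  and action_mult: "\<alpha> g (x * y) = \<alpha> g x * \<alpha> g y"
  and action_star: "\<alpha> g (star x) = star (\<alpha> g x)"
  and surj_action: "surj (\<alpha> g)"
  using cstar_action unfolding cstar_action_def bij_def by auto

lemma action_action: "\<alpha> g (\<alpha> h x) = \<alpha> (g + h) x"
  using cstar_action unfolding cstar_action_def by simp

lemma action_0: "\<alpha> g 0 = 0"
  using action_add[of g 0 0] by simp

lemma action_1: "\<alpha> g 1 = 1"
proof -
  have "\<alpha> g 1 * \<alpha> g y = \<alpha> g y" for y
    by (simp flip: action_mult)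
  then have "\<alpha> g 1 * z = z" for z
    using surj_action[of g] by (metis surjD)
  from this[of 1] show ?thesis
    by simp
qed

lemma trace_comp_action:
  assumes "\<tau> \<in> traces"
  shows "(\<lambda>x. \<tau> (\<alpha> g x)) \<in> traces"
  unfolding tracial_states_def clinear_fun_def mem_Collect_eq
proof (intro conjI allI)
  fix x y
  show "\<tau> (\<alpha> g (x + y)) = \<tau> (\<alpha> g x) + \<tau> (\<alpha> g y)"
    by (simp add: action_add trace_add[OF assms])
  show "\<tau> (\<alpha> g (x * y)) = \<tau> (\<alpha> g (y * x))"
    by (simp add: action_mult trace_commute[OF assms])
next
  fix c x
  show "\<tau> (\<alpha> g (cscale c x)) = c * \<tau> (\<alpha> g x)"
    by (simp add: action_cscale trace_cscale[OF assms])
next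
  fix x
  have "\<alpha> g (star x * x) = star (\<alpha> g x) * \<alpha> g x"
    by (simp add: action_mult action_star)
  then show "Im (\<tau> (\<alpha> g (star x * x))) = 0" and "Re (\<tau> (\<alpha> g (star x * x))) \<ge> 0"
    by (simp_all add: Im_trace_star_mult_self[OF assms] Re_trace_star_mult_self[OF assms])
next
  show "\<tau> (\<alpha> g 1) = 1"
    by (simp add: action_1 trace_one[OF assms])
qed

lemma amenable_imp_invariant_trace:
  assumes "amenable_group TYPE('g)" and "\<tau>\<^sub>0 \<in> traces"
  shows "\<exists>\<tau>\<in>traces. \<forall>g x. \<tau> (\<alpha> g x) = \<tau> x"
proof -
  obtain m :: "('g \<Rightarrow> real) \<Rightarrow> real" where mean: "is_mean m" and "left_invariant m"
    using assms(1) amenable_group_iff_invariant_mean by blast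
  define orbit where "orbit x = (\<lambda>k. \<tau>\<^sub>0 (\<alpha> (- k) x))" for x
  define \<tau> where "\<tau> x = complex_mean m (orbit x)" for x
  have bounded: "bounded (range (orbit x))" for x
    unfolding bounded_iff orbit_def
    by (intro exI[of _ "4 * norm x"]) (auto intro: norm_trace_le[OF trace_comp_action[OF assms(2)]])
  have "\<tau> \<in> traces"
    unfolding tracial_states_def clinear_fun_def mem_Collect_eq
  proof (intro conjI allI)
    fix x y
    have "orbit (x + y) = (\<lambda>k. orbit x k + orbit y k)"
      by (simp add: orbit_def action_add trace_add[OF assms(2)])
    then show "\<tau> (x + y) = \<tau> x + \<tau> y"
      by (simp add: \<tau>_def complex_mean_add[OF mean bounded bounded])
    have "orbit (x * y) = orbit (y * x)"
      by (simp add: orbit_def action_mult trace_commute[OF assms(2)])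
    then show "\<tau> (x * y) = \<tau> (y * x)"
      by (simp add: \<tau>_def)
  next
    fix c x
    have "orbit (cscale c x) = (\<lambda>k. c * orbit x k)"
      by (simp add: orbit_def action_cscale trace_cscale[OF assms(2)])
    then show "\<tau> (cscale c x) = c * \<tau> x"
      by (simp add: \<tau>_def complex_mean_mult[OF mean bounded])
  next
    fix x
    have "Im (orbit (star x * x) k) = 0" and "Re (orbit (star x * x) k) \<ge> 0" for k
      by (simp_all add: orbit_def action_mult action_star Im_trace_star_mult_self[OF assms(2)]
          Re_trace_star_mult_self[OF assms(2)])
    then show "Im (\<tau> (star x * x)) = 0" and "Re (\<tau> (star x * x)) \<ge> 0"
      unfolding \<tau>_def using complex_mean_nonneg[OF mean bounded] by blast+
  next
    have "orbit 1 = (\<lambda>_. 1)"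
      by (simp add: orbit_def action_1 trace_one[OF assms(2)])
    then show "\<tau> 1 = 1"
      by (simp add: \<tau>_def complex_mean_one[OF mean])
  qed
  moreover have "\<tau> (\<alpha> g x) = \<tau> x" for g x
  proof -
    have "orbit (\<alpha> g x) = (\<lambda>k. orbit x (- g + k))"
      by (simp add: orbit_def action_action minus_add)
    then show ?thesis
      by (simp add: \<tau>_def complex_mean_translate[OF \<open>left_invariant m\<close> bounded])
  qed
  ultimately show ?thesis
    by blast
qed

lemma tracially_amenableE:
  assumes "tracially_amenable star cscale \<alpha>" and "finite K" and "e > 0"
  obtains \<xi> :: "'g \<Rightarrow> 'a" where "finite (fsupp \<xi>)"
    and "norm2u star cscale (cc_inner star \<xi> \<xi> - 1) < e"
    and "\<And>g. g \<in> K \<Longrightarrow> norm2u_cc star cscale (\<lambda>h. \<alpha> (- g) (\<xi> (g + h)) - \<xi> h) < e"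
proof -
  have "finite ({} :: 'a set) \<and> finite (uminus ` K) \<and> e > 0"
    using assms(2,3) by simp
  from assms(1)[unfolded tracially_amenable_def, rule_format, OF this]
  obtain \<xi> :: "'g \<Rightarrow> 'a" where "finite (fsupp \<xi>)"
    and "norm2u star cscale (cc_inner star \<xi> \<xi> - 1) < e"
    and "\<forall>g\<in>uminus ` K. norm2u_cc star cscale (\<lambda>h. \<alpha> g (\<xi> (- g + h)) - \<xi> h) < e"
    by blast
  then show ?thesis
    by (intro that) auto
qed

context
  fixes \<tau> assumes trace: "\<tau> \<in> traces" and invariant: "\<And>g x. \<tau> (\<alpha> g x) = \<tau> x"
begin

lemma sum_abs_trace_weight_translate_le:
  assumes "finite W" and "e > 0" and "fsupp \<xi> \<subseteq> W" and "fsupp (\<lambda>h. \<xi> (g + h)) \<subseteq> W"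
    and "norm2u_cc star cscale (\<lambda>h. \<alpha> (- g) (\<xi> (g + h)) - \<xi> h) < \<delta>"
  shows "(\<Sum>h\<in>W. \<bar>trace_weight \<tau> \<xi> (g + h) - trace_weight \<tau> \<xi> h\<bar>) \<le>
    (1 + 1 / e) * \<delta>\<^sup>2 + e * sum (trace_weight \<tau> \<xi>) W"
proof -
  define d where "d = (\<lambda>h. \<alpha> (- g) (\<xi> (g + h)) - \<xi> h)"
  have "trace_weight \<tau> \<xi> (g + h) =
      Re (\<tau> (star (\<alpha> (- g) (\<xi> (g + h))) * \<alpha> (- g) (\<xi> (g + h))))" for h
    by (simp add: trace_weight_def invariant flip: action_star action_mult)
  then have "\<bar>trace_weight \<tau> \<xi> (g + h) - trace_weight \<tau> \<xi> h\<bar> \<le>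
      (1 + 1 / e) * trace_weight \<tau> d h + e * trace_weight \<tau> \<xi> h" for h
    using Re_trace_star_mult_self_diff_le[OF trace \<open>e > 0\<close>] by (simp add: trace_weight_def d_def)
  then have "(\<Sum>h\<in>W. \<bar>trace_weight \<tau> \<xi> (g + h) - trace_weight \<tau> \<xi> h\<bar>) \<le>
      (\<Sum>h\<in>W. (1 + 1 / e) * trace_weight \<tau> d h + e * trace_weight \<tau> \<xi> h)"
    by (rule sum_mono)
  also have "\<dots> = (1 + 1 / e) * sum (trace_weight \<tau> d) W + e * sum (trace_weight \<tau> \<xi>) W"
    by (simp add: sum.distrib sum_distrib_left)
  also have "\<dots> \<le> (1 + 1 / e) * \<delta>\<^sup>2 + e * sum (trace_weight \<tau> \<xi>) W"
  proof -
    have "fsupp d \<subseteq> W"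
    proof
      fix h assume "h \<in> fsupp d"
      then have "\<xi> h \<noteq> 0 \<or> \<xi> (g + h) \<noteq> 0"
        by (auto simp: fsupp_def d_def action_0)
      with assms(3,4) show "h \<in> W"
        by (auto simp: fsupp_def)
    qed
    then have "sum (trace_weight \<tau> d) W = Re (\<tau> (cc_inner star d d))"
      using Re_trace_cc_inner[OF trace \<open>finite W\<close>] by simp
    also have "\<dots> \<le> \<delta>\<^sup>2"
      using Re_trace_cc_inner_less_square[OF trace assms(5)[folded d_def]] by simp
    finally have "sum (trace_weight \<tau> d) W \<le> \<delta>\<^sup>2" .
    with \<open>e > 0\<close> show ?thesis
      by (simp add: mult_left_mono)
  qed
  finally show ?thesis .
qed

lemma sum_abs_trace_weight_translate_le_mass:
  assumes "finite (fsupp \<xi>)" and "e > 0" and "e \<le> 1/2"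
    and mass: "Re (\<tau> (cc_inner star \<xi> \<xi>)) \<ge> 1/2"
    and "norm2u_cc star cscale (\<lambda>h. \<alpha> (- g) (\<xi> (g + h)) - \<xi> h) < e"
  shows "(\<Sum>h\<in>fsupp \<xi> \<union> (\<lambda>x. - g + x) ` fsupp \<xi>. \<bar>trace_weight \<tau> \<xi> (g + h) - trace_weight \<tau> \<xi> h\<bar>)
    \<le> 4 * e * Re (\<tau> (cc_inner star \<xi> \<xi>))"
proof -
  define W where "W = fsupp \<xi> \<union> (\<lambda>x. - g + x) ` fsupp \<xi>"
  define N where "N = Re (\<tau> (cc_inner star \<xi> \<xi>))"
  have W: "finite W" "fsupp \<xi> \<subseteq> W" "fsupp (\<lambda>h. \<xi> (g + h)) \<subseteq> W"
    using assms(1) by (auto simp: W_def fsupp_translate)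
  have "sum (trace_weight \<tau> \<xi>) W = N"
    using Re_trace_cc_inner[OF trace W(1,2)] by (simp add: N_def)
  then have "(\<Sum>h\<in>W. \<bar>trace_weight \<tau> \<xi> (g + h) - trace_weight \<tau> \<xi> h\<bar>) \<le>
      (1 + 1 / e) * e\<^sup>2 + e * N"
    using sum_abs_trace_weight_translate_le[OF W(1) \<open>e > 0\<close> W(2,3) assms(5)] by simp
  also have "\<dots> = e * (1 + e + N)"
    using \<open>e > 0\<close> by (simp add: power2_eq_square field_simps)
  also have "\<dots> \<le> 4 * e * N"
    using \<open>e > 0\<close> \<open>e \<le> 1/2\<close> mass by (simp add: N_def mult_left_mono)
  finally show ?thesis
    unfolding W_def N_def .
qed

end

lemma invariant_trace_imp_reiter_property:
  assumes trace: "\<tau> \<in> traces" and invariant: "\<And>g x. \<tau> (\<alpha> g x) = \<tau> x"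
    and "tracially_amenable star cscale \<alpha>"
  shows "reiter_property TYPE('g)"
  unfolding reiter_property_def
proof (intro allI impI)
  fix K :: "'g set" and \<epsilon> :: real
  assume "finite K \<and> \<epsilon> > 0"
  define e where "e = min (1/2) (\<epsilon>/8)"
  have "e > 0" and "e \<le> 1/2" and "e \<le> \<epsilon>/8"
    using \<open>finite K \<and> \<epsilon> > 0\<close> by (auto simp: e_def)
  obtain \<xi> :: "'g \<Rightarrow> 'a" where "finite (fsupp \<xi>)"
    and near_1: "norm2u star cscale (cc_inner star \<xi> \<xi> - 1) < e"
    and almost_invariant: "\<And>g. g \<in> K \<Longrightarrow> norm2u_cc star cscale (\<lambda>h. \<alpha> (- g) (\<xi> (g + h)) - \<xi> h) < e"
    using tracially_amenableE[OF assms(3)] \<open>finite K \<and> \<epsilon> > 0\<close> \<open>e > 0\<close> by blast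
  define S where "S = fsupp \<xi>"
  define N where "N = Re (\<tau> (cc_inner star \<xi> \<xi>))"
  have "\<bar>N - 1\<bar> < e"
    using abs_Re_trace_le_norm2u[OF trace, of "cc_inner star \<xi> \<xi> - 1"] near_1
    by (simp add: N_def trace_diff[OF trace] trace_one[OF trace])
  then have "N \<ge> 1/2"
    using \<open>e \<le> 1/2\<close> by linarith
  have "N = sum (trace_weight \<tau> \<xi>) S"
    using Re_trace_cc_inner[OF trace \<open>finite (fsupp \<xi>)\<close>] by (simp add: N_def S_def)
  define \<mu> where "\<mu> h = trace_weight \<tau> \<xi> h / N" for h
  show "\<exists>\<mu> S. finite S \<and> (\<forall>h. h \<notin> S \<longrightarrow> \<mu> h = 0) \<and> (\<forall>h. \<mu> h \<ge> 0) \<and> sum \<mu> S = 1 \<and>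
      (\<forall>g\<in>K. (\<Sum>h\<in>S \<union> (\<lambda>x. - g + x) ` S. \<bar>\<mu> (g + h) - \<mu> h\<bar>) \<le> \<epsilon>)"
  proof (intro exI conjI allI impI ballI)
    show "finite S"
      using \<open>finite (fsupp \<xi>)\<close> by (simp add: S_def)
    show "\<mu> h = 0" if "h \<notin> S" for h
      using that by (simp add: \<mu>_def S_def fsupp_def trace_weight_eq_0[OF trace])
    show "\<mu> h \<ge> 0" for h
      using \<open>N \<ge> 1/2\<close> by (simp add: \<mu>_def trace_weight_nonneg[OF trace])
    show "sum \<mu> S = 1"
      using \<open>N \<ge> 1/2\<close> \<open>N = sum (trace_weight \<tau> \<xi>) S\<close> by (simp add: \<mu>_def flip: sum_divide_distrib)
  next
    fix g assume "g \<in> K"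
    have "(\<Sum>h\<in>S \<union> (\<lambda>x. - g + x) ` S. \<bar>\<mu> (g + h) - \<mu> h\<bar>) =
        (\<Sum>h\<in>S \<union> (\<lambda>x. - g + x) ` S. \<bar>trace_weight \<tau> \<xi> (g + h) - trace_weight \<tau> \<xi> h\<bar>) / N"
      using \<open>N \<ge> 1/2\<close> by (simp add: \<mu>_def abs_divide sum_divide_distrib flip: diff_divide_distrib)
    also have "\<dots> \<le> 4 * e"
      using sum_abs_trace_weight_translate_le_mass[OF trace invariant \<open>finite (fsupp \<xi>)\<close> \<open>e > 0\<close>
          \<open>e \<le> 1/2\<close> _ almost_invariant[OF \<open>g \<in> K\<close>]] \<open>N \<ge> 1/2\<close>
      by (simp add: N_def S_def divide_le_eq mult_ac)
    also have "\<dots> \<le> \<epsilon>"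
      using \<open>e \<le> \<epsilon>/8\<close> \<open>finite K \<and> \<epsilon> > 0\<close> by linarith
    finally show "(\<Sum>h\<in>S \<union> (\<lambda>x. - g + x) ` S. \<bar>\<mu> (g + h) - \<mu> h\<bar>) \<le> \<epsilon>" .
  qed
qed

end

theorem lemma2p9:
  fixes star :: "'a::{real_normed_algebra_1,banach} \<Rightarrow> 'a"
    and cscale :: "complex \<Rightarrow> 'a \<Rightarrow> 'a"
    and \<alpha> :: "'g::group_add \<Rightarrow> 'a \<Rightarrow> 'a"
  assumes "unital_cstar_algebra star cscale"
    and "cstar_action star cscale \<alpha>"
    and "tracially_amenable star cscale \<alpha>"
    and "tracial_states star cscale \<noteq> {}"
  shows "amenable_group TYPE('g) \<longleftrightarrow>
         (\<exists>\<tau>\<in>tracial_states star cscale. \<forall>g x. \<tau> (\<alpha> g x) = \<tau> x)"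
proof -
  interpret cstar_group_action star cscale \<alpha>
    using assms(1,2)
    by (simp add: cstar_group_action_def cstar_algebra_def cstar_group_action_axioms_def)
  show ?thesis
  proof
    assume "amenable_group TYPE('g)"
    with assms(4) show "\<exists>\<tau>\<in>traces. \<forall>g x. \<tau> (\<alpha> g x) = \<tau> x"
      using amenable_imp_invariant_trace by blast
  next
    assume "\<exists>\<tau>\<in>traces. \<forall>g x. \<tau> (\<alpha> g x) = \<tau> x"
    then show "amenable_group TYPE('g)"
      using invariant_trace_imp_reiter_property[OF _ _ assms(3)] reiter_property_imp_amenable
      by blast
  qed
qed

end
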